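(* Let $n\ge 3$ and let $(u,v)$ be an MAB pair of binary words with $|u|=|v|=n$. Put $i=\mathrm{lsb}(u,v)$ and $j=\mathrm{lsb}(v,u)$. Then $i+j>n$ if and only if there exist $\alpha,\gamma,\beta,\beta',\gamma',\alpha'\in\Sigma^+$ such that $u=\alpha\gamma\beta$, $v=\beta'\gamma'\alpha'$, $\alpha\gamma\sim_{\mathrm{abl}}\gamma'\alpha'$, $\gamma\beta\sim_{\mathrm{abl}}\beta'\gamma'$, $|\alpha\gamma|=j$, $|\gamma\beta|=i$, and both $(\gamma\beta,\beta'\gamma')$ and $(\alpha\gamma,\gamma'\alpha')$ are MAU pairs.
   Context: Let $\Sigma=\{a,b\}$. For a word $w$ and a letter $c$, $|w|_c$ denotes the number of occurrences of $c$ in $w$. Two words $x,y$ are abelian equivalent, written $x\sim_{\mathrm{abl}}y$, if $|x|_c=|y|_c$ for all $c\in\Sigma$. For words $u,v$: a pair $(x,y)$ is an internal abelian-border of $(u,v)$ if $x$ is a nonempty proper suffix of $u$, $y$ is a proper prefix of $v$, and $x\sim_{\mathrm{abl}}y$; it is an external abelian-border of $(u,v)$ if $x$ is a nonempty proper prefix of $u$, $y$ is a proper suffix of $v$, and $x\sim_{\mathrm{abl}}y$. The pair $(u,v)$ is mutually abelian-bordered (MAB) if it has both an internal and an external abelian-border, and mutually abelian-unbordered (MAU) if it has neither. If $(u,v)$ has an internal abelian-border, $\mathrm{sb}(u,v)$ denotes its internal abelian-border $(x,y)$ of minimal length and $\mathrm{lsb}(u,v)=|x|$ is that minimal length. *)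

theory Defs
  imports Main "HOL-Library.Sublist"
begin

datatype letter = a | b

type_synonym word = "letter list"

definition abl_eq :: "word \<Rightarrow> word \<Rightarrow> bool" where
  "abl_eq x y \<longleftrightarrow> (\<forall>c. count_list x c = count_list y c)"

definition int_border :: "word \<Rightarrow> word \<Rightarrow> word \<Rightarrow> word \<Rightarrow> bool" where
  "int_border u v x y \<longleftrightarrow> x \<noteq> [] \<and> strict_suffix x u \<and> strict_prefix y v \<and> abl_eq x y"

definition ext_border :: "word \<Rightarrow> word \<Rightarrow> word \<Rightarrow> word \<Rightarrow> bool" where
  "ext_border u v x y \<longleftrightarrow> x \<noteq> [] \<and> strict_prefix x u \<and> strict_suffix y v \<and> abl_eq x y"

definition MAB :: "word \<Rightarrow> word \<Rightarrow> bool" where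
  "MAB u v \<longleftrightarrow> (\<exists>x y. int_border u v x y) \<and> (\<exists>x y. ext_border u v x y)"

definition MAU :: "word \<Rightarrow> word \<Rightarrow> bool" where
  "MAU u v \<longleftrightarrow> \<not> (\<exists>x y. int_border u v x y) \<and> \<not> (\<exists>x y. ext_border u v x y)"

text \<open>Length of the shortest internal abelian-border (meaningful when one exists).\<close>
definition lsb :: "word \<Rightarrow> word \<Rightarrow> nat" where
  "lsb u v = (LEAST k. \<exists>x y. int_border u v x y \<and> length x = k)"

end

theory Submission
  imports Defs
begin

(* The two shortest internal abelian borders, of (u,v) and of (v,u), are a suffix of u with
   prefix of v of length i and a prefix of u with suffix of v of length j.  When i + j > n the
   prefix and the suffix of u overlap, and likewise in v; the overlaps give the factorisations.
   Both borders are MAU by minimality: an internal border of a border is again an internal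
   border of (u,v), and an external one leaves, by abelian cancellation, a shorter internal one.
   Conversely the factorisations force i + j = n + |\<gamma>| > n. *)

lemma length_eq_count_a_b: "length w = count_list w a + count_list w b"
proof (induction w)
  case (Cons c w)
  then show ?case by (cases c) auto
qed simp

lemma abl_eq_length: "abl_eq x y \<Longrightarrow> length x = length y"
  unfolding abl_eq_def by (metis length_eq_count_a_b)

lemma abl_eq_sym: "abl_eq x y \<Longrightarrow> abl_eq y x"
  unfolding abl_eq_def by simp

lemma abl_eq_append_cancel: "abl_eq (x @ x') (y' @ y) \<Longrightarrow> abl_eq x y \<Longrightarrow> abl_eq x' y'"
  unfolding abl_eq_def by (metis add.commute add_left_cancel count_list_append)

lemma ext_border_iff_int_border_swap: "ext_border u v x y \<longleftrightarrow> int_border v u y x"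
  unfolding ext_border_def int_border_def
  using abl_eq_length[of x y] abl_eq_sym[of x y] abl_eq_sym[of y x] by auto

lemma MAU_sym: "MAU u v \<Longrightarrow> MAU v u"
  unfolding MAU_def ext_border_iff_int_border_swap by blast

lemma MAB_imp_int_border_swap: "MAB u v \<Longrightarrow> \<exists>x y. int_border v u x y"
  unfolding MAB_def ext_border_iff_int_border_swap by blast

lemma int_border_trans: "int_border x y x' y' \<Longrightarrow> int_border u v x y \<Longrightarrow> int_border u v x' y'"
  unfolding int_border_def using prefix_order.less_trans suffix_order.less_trans by blast

lemma ext_border_imp_shorter_int_border:
  assumes "abl_eq x y" and "ext_border x y x' y'"
  obtains x'' y'' where "int_border x y x'' y''" and "length x'' < length x"
proof -
  from assms(2) obtain x'' where x: "x = x' @ x''" "x'' \<noteq> []" "x' \<noteq> []"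
    unfolding ext_border_def strict_prefix_def prefix_def by auto
  from assms(2) obtain y'' where y: "y = y'' @ y'" "y'' \<noteq> []"
    unfolding ext_border_def strict_suffix_def suffix_def by auto
  have "abl_eq x' y'" using assms(2) unfolding ext_border_def by simp
  then have "y' \<noteq> []" using x(3) abl_eq_length by fastforce
  have "abl_eq x'' y''"
    using abl_eq_append_cancel assms(1) \<open>abl_eq x' y'\<close> x y by metis
  with x y \<open>y' \<noteq> []\<close> have "int_border x y x'' y''"
    unfolding int_border_def strict_suffix_def strict_prefix_def by (auto simp: suffix_def)
  with x show thesis using that by simp
qed

lemma lsb_le: "int_border u v x y \<Longrightarrow> lsb u v \<le> length x"
  unfolding lsb_def by (auto intro: Least_le)

lemma lsb_shortest_int_border:
  assumes "\<exists>x y. int_border u v x y"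
  obtains x y where "int_border u v x y" and "length x = lsb u v"
  using LeastI_ex[of "\<lambda>k. \<exists>x y. int_border u v x y \<and> length x = k"] assms
  unfolding lsb_def by blast

lemma MAU_shortest_int_border:
  assumes border: "int_border u v x y" and shortest: "length x = lsb u v"
  shows "MAU x y"
proof -
  have no_shorter: "\<not> int_border u v x' y'" if "length x' < length x" for x' y'
    using lsb_le shortest that by fastforce
  have no_int: "\<not> int_border x y x' y'" for x' y'
  proof
    assume inner: "int_border x y x' y'"
    then have "length x' < length x"
      unfolding int_border_def by (simp add: suffix_length_less)
    with no_shorter int_border_trans[OF inner border] show False by blast
  qed
  moreover have "\<not> ext_border x y x' y'" for x' y'
  proof
    assume "ext_border x y x' y'"
    moreover have "abl_eq x y" using border unfolding int_border_def by simp
    ultimately obtain x'' y'' where "int_border x y x'' y''" "length x'' < length x"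
      using ext_border_imp_shorter_int_border by blast
    with no_int show False by blast
  qed
  ultimately show ?thesis unfolding MAU_def by blast
qed

lemma strict_prefix_suffix_overlap:
  assumes "strict_prefix p w" and "strict_suffix s w" and "length w < length p + length s"
  obtains \<alpha> \<gamma> \<beta> where "\<alpha> \<noteq> []" "\<gamma> \<noteq> []" "\<beta> \<noteq> []"
    and "w = \<alpha> @ \<gamma> @ \<beta>" "p = \<alpha> @ \<gamma>" "s = \<gamma> @ \<beta>"
proof -
  from assms(1) obtain \<beta> where w\<beta>: "w = p @ \<beta>" "\<beta> \<noteq> []"
    unfolding strict_prefix_def prefix_def by auto
  from assms(2) obtain \<alpha> where w\<alpha>: "w = \<alpha> @ s" "\<alpha> \<noteq> []"
    unfolding strict_suffix_def suffix_def by auto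
  define \<gamma> where "\<gamma> = take (length p - length \<alpha>) s"
  have "length \<alpha> < length p" using w\<alpha> assms(3) by simp
  have "p = take (length p) w" using w\<beta> by simp
  also have "\<dots> = \<alpha> @ \<gamma>"
    using w\<alpha> \<open>length \<alpha> < length p\<close> unfolding \<gamma>_def by simp
  finally have p: "p = \<alpha> @ \<gamma>" .
  with w\<beta> w\<alpha> have s: "s = \<gamma> @ \<beta>" by simp
  have "\<gamma> \<noteq> []" using \<open>length \<alpha> < length p\<close> p by auto
  with w\<alpha> w\<beta> p s show thesis using that by simp
qed

theorem mainTheorem3:
  fixes u v :: word and n :: nat
  assumes "n \<ge> 3" and "length u = n" and "length v = n" and "MAB u v"
  shows "lsb u v + lsb v u > n \<longleftrightarrow>
    (\<exists>\<alpha> \<gamma> \<beta> \<beta>' \<gamma>' \<alpha>'.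
       \<alpha> \<noteq> [] \<and> \<gamma> \<noteq> [] \<and> \<beta> \<noteq> [] \<and> \<beta>' \<noteq> [] \<and> \<gamma>' \<noteq> [] \<and> \<alpha>' \<noteq> [] \<and>
       u = \<alpha> @ \<gamma> @ \<beta> \<and> v = \<beta>' @ \<gamma>' @ \<alpha>' \<and>
       abl_eq (\<alpha> @ \<gamma>) (\<gamma>' @ \<alpha>') \<and> abl_eq (\<gamma> @ \<beta>) (\<beta>' @ \<gamma>') \<and>
       length (\<alpha> @ \<gamma>) = lsb v u \<and> length (\<gamma> @ \<beta>) = lsb u v \<and>
       MAU (\<gamma> @ \<beta>) (\<beta>' @ \<gamma>') \<and> MAU (\<alpha> @ \<gamma>) (\<gamma>' @ \<alpha>'))"
    (is "_ \<longleftrightarrow> ?factorisations")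
proof
  assume long: "lsb u v + lsb v u > n"
  obtain x y where xy: "int_border u v x y" "length x = lsb u v"
    using lsb_shortest_int_border assms(4) unfolding MAB_def by metis
  obtain x' y' where xy': "int_border v u x' y'" "length x' = lsb v u"
    using lsb_shortest_int_border MAB_imp_int_border_swap[OF assms(4)] by metis
  have "abl_eq x y" "abl_eq x' y'" using xy(1) xy'(1) unfolding int_border_def by simp_all
  then have "length y = lsb u v" "length y' = lsb v u"
    using xy(2) xy'(2) abl_eq_length by simp_all
  have borders_overlap: "length u < length y' + length x" "length v < length y + length x'"
    using long assms(2,3) xy(2) xy'(2) \<open>length y = lsb u v\<close> \<open>length y' = lsb v u\<close>
    by simp_all
  obtain \<alpha> \<gamma> \<beta> where
    "\<alpha> \<noteq> []" "\<gamma> \<noteq> []" "\<beta> \<noteq> []" "u = \<alpha> @ \<gamma> @ \<beta>" "y' = \<alpha> @ \<gamma>" "x = \<gamma> @ \<beta>"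
    using strict_prefix_suffix_overlap[OF _ _ borders_overlap(1)] xy(1) xy'(1)
    unfolding int_border_def by blast
  moreover obtain \<beta>' \<gamma>' \<alpha>' where
    "\<beta>' \<noteq> []" "\<gamma>' \<noteq> []" "\<alpha>' \<noteq> []" "v = \<beta>' @ \<gamma>' @ \<alpha>'" "y = \<beta>' @ \<gamma>'" "x' = \<gamma>' @ \<alpha>'"
    using strict_prefix_suffix_overlap[OF _ _ borders_overlap(2)] xy(1) xy'(1)
    unfolding int_border_def by blast
  moreover have "MAU x y" "MAU y' x'"
    using MAU_shortest_int_border MAU_sym xy xy' by blast+
  ultimately show ?factorisations
    using \<open>abl_eq x y\<close> abl_eq_sym[OF \<open>abl_eq x' y'\<close>] xy(2) \<open>length y' = lsb v u\<close> by blast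
next
  assume ?factorisations
  then obtain \<alpha> \<gamma> \<beta> where "\<gamma> \<noteq> []" "u = \<alpha> @ \<gamma> @ \<beta>"
    "length (\<alpha> @ \<gamma>) = lsb v u" "length (\<gamma> @ \<beta>) = lsb u v" by blast
  then have "lsb u v + lsb v u = length u + length \<gamma>" and "length \<gamma> > 0" by auto
  then show "lsb u v + lsb v u > n" using assms(2) by linarith
qed

end
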